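(* Let $p\ge 1$ be an integer and for each $i\in\{0,\dots,p\}$ let $S_i$ be a $\Delta_i$-star with $\Delta_i\ge 3$. Let $G_0=S_0$ and for $i\in\{1,\dots,p\}$ let $G_i = G_{i-1}\rhd_{v_{i-1}} S_i$, where $v_{i-1}$ is a vertex of $G_{i-1}$. Let $G=G_p$ have order $n$ and maximum degree $\Delta$, and let $\Delta_{\max}=\max\{\Delta_i: 0\le i\le p\}$. Then \[\gamma^{\rm ID}(G)\le \left(\frac{\Delta_{\max}-1}{\Delta_{\max}}\right)n + \frac{1}{\Delta_0} \le \left(\frac{\Delta-1}{\Delta}\right)n + \frac13.\]
   Context: An identifying code of a graph $G$ is a set $C\subseteq V(G)$ such that every vertex $v$ has $N[v]\cap C\neq\emptyset$ and for all distinct $u,v$, $N[u]\cap C \ne N[v]\cap C$, where $N[v]$ is the closed neighborhood; $\gamma^{\rm ID}(G)$ is its minimum size. A $k$-star is $K_{1,k}$. For a graph $G'$, a vertex $v$ of $G'$ and a star $S$, $G'\rhd_v S$ is the graph obtained from the disjoint union of $G'$ and $S$ by identifying $v$ with a leaf of $S$. *)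

theory Defs
  imports Complex_Main
begin

text \<open>Finite simple graphs on natural-number vertices: a pair (V, E) where E is a set of
  2-element subsets of V.\<close>
type_synonym graph = "nat set \<times> nat set set"

definition verts :: "graph \<Rightarrow> nat set" where "verts G = fst G"
definition edges :: "graph \<Rightarrow> nat set set" where "edges G = snd G"

definition closed_nbhd :: "graph \<Rightarrow> nat \<Rightarrow> nat set" where
  "closed_nbhd G v = insert v {u \<in> verts G. {u, v} \<in> edges G}"

definition degree :: "graph \<Rightarrow> nat \<Rightarrow> nat" where
  "degree G v = card {u \<in> verts G. u \<noteq> v \<and> {u, v} \<in> edges G}"

definition max_degree :: "graph \<Rightarrow> nat" where
  "max_degree G = Max (degree G ` verts G)"

definition is_identifying_code :: "graph \<Rightarrow> nat set \<Rightarrow> bool" where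
  "is_identifying_code G C \<longleftrightarrow>
     C \<subseteq> verts G \<and>
     (\<forall>v \<in> verts G. closed_nbhd G v \<inter> C \<noteq> {}) \<and>
     (\<forall>u \<in> verts G. \<forall>v \<in> verts G. u \<noteq> v \<longrightarrow> closed_nbhd G u \<inter> C \<noteq> closed_nbhd G v \<inter> C)"

definition gamma_ID :: "graph \<Rightarrow> nat" where
  "gamma_ID G = Min (card ` {C. is_identifying_code G C})"

definition star :: "nat \<Rightarrow> graph" where
  "star k = ({0..k}, {{0, j} | j. 1 \<le> j \<and> j \<le> k})"

text \<open>G \<rhd>_v S for S a k-star: a fresh centre m and k-1 fresh leaves are added, and the
  centre is joined to v (v plays the role of the identified leaf of S) and to the
  fresh leaves. This is the graph G \<rhd>_v S up to isomorphism (renaming of S's vertices).\<close>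
definition glue_star :: "graph \<Rightarrow> nat \<Rightarrow> nat \<Rightarrow> graph" where
  "glue_star G v k =
     (let m = Max (verts G) + 1 in
      (verts G \<union> {m..m + k - 1},
       edges G \<union> {{m, v}} \<union> {{m, j} | j. m < j \<and> j \<le> m + k - 1}))"

fun star_chain :: "(nat \<Rightarrow> nat) \<Rightarrow> (nat \<Rightarrow> nat) \<Rightarrow> nat \<Rightarrow> graph" where
  "star_chain \<Delta> v 0 = star (\<Delta> 0)"
| "star_chain \<Delta> v (Suc i) = glue_star (star_chain \<Delta> v i) (v i) (\<Delta> (Suc i))"

end

(* The centres of the p + 1 stars form a vertex cover Z of G, every centre has at least two
   neighbours outside Z, and the centre added last sees its own fresh leaves, which no earlier
   centre sees. Hence V - Z is an identifying code: a non-centre u is separated by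
   N[u] - Z = {u}, a centre z by the set of at least two non-centres adjacent to it, and these
   sets are pairwise distinct. So gamma_ID(G) <= n - (p + 1) = 1 + sum (Delta_i - 1), and the
   two bounds follow from Delta_i <= Delta_max <= Delta, 1/Delta_max <= 1/Delta_0 and
   Delta_0 >= 3. *)

theory Submission
  imports Defs
begin

definition outer_nbhd :: "graph \<Rightarrow> nat set \<Rightarrow> nat \<Rightarrow> nat set" where
  "outer_nbhd G Z z = {a \<in> verts G - Z. {a, z} \<in> edges G}"

definition separating_vertex_cover :: "graph \<Rightarrow> nat set \<Rightarrow> bool" where
  "separating_vertex_cover G Z \<longleftrightarrow>
     Z \<subseteq> verts G \<and> (\<forall>a b. {a, b} \<in> edges G \<longrightarrow> a \<in> Z \<or> b \<in> Z) \<and>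
     (\<forall>z\<in>Z. 2 \<le> card (outer_nbhd G Z z)) \<and> inj_on (outer_nbhd G Z) Z"

lemma is_identifying_code_Diff_cover:
  assumes "separating_vertex_cover G Z"
  shows "is_identifying_code G (verts G - Z)"
proof -
  let ?C = "verts G - Z"
  have cover: "\<And>a b. {a, b} \<in> edges G \<Longrightarrow> a \<in> Z \<or> b \<in> Z"
    and two: "\<And>z. z \<in> Z \<Longrightarrow> 2 \<le> card (outer_nbhd G Z z)"
    and inj: "inj_on (outer_nbhd G Z) Z"
    using assms unfolding separating_vertex_cover_def by auto
  have trace_outside: "closed_nbhd G u \<inter> ?C = {u}" if "u \<in> verts G" "u \<notin> Z" for u
    using that cover unfolding closed_nbhd_def by blast
  have trace_inside: "closed_nbhd G z \<inter> ?C = outer_nbhd G Z z" if "z \<in> Z" for z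
    using that unfolding closed_nbhd_def outer_nbhd_def by auto
  have card_trace: "card (closed_nbhd G u \<inter> ?C) = 1 \<longleftrightarrow> u \<notin> Z" if "u \<in> verts G" for u
    using that trace_outside trace_inside two by fastforce
  show ?thesis
    unfolding is_identifying_code_def
  proof (intro conjI ballI impI)
    fix u assume "u \<in> verts G"
    then show "closed_nbhd G u \<inter> ?C \<noteq> {}"
      using trace_outside trace_inside two by (cases "u \<in> Z") force+
  next
    fix u w assume u: "u \<in> verts G" and w: "w \<in> verts G" and "u \<noteq> w"
    show "closed_nbhd G u \<inter> ?C \<noteq> closed_nbhd G w \<inter> ?C"
    proof
      assume same: "closed_nbhd G u \<inter> ?C = closed_nbhd G w \<inter> ?C"
      then have "u \<in> Z \<longleftrightarrow> w \<in> Z"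
        using card_trace u w by metis
      then show False
        using same \<open>u \<noteq> w\<close> u w trace_outside trace_inside inj_onD[OF inj]
        by (cases "u \<in> Z") auto
    qed
  qed auto
qed

lemma gamma_ID_le_card:
  assumes "finite (verts G)" and "is_identifying_code G C"
  shows "gamma_ID G \<le> card C"
proof -
  have "{C. is_identifying_code G C} \<subseteq> Pow (verts G)"
    by (auto simp: is_identifying_code_def)
  then have "finite {C. is_identifying_code G C}"
    using assms(1) by (meson finite_Pow_iff finite_subset)
  then show ?thesis
    unfolding gamma_ID_def using assms(2) by (intro Min_le) auto
qed

lemma degree_le_max_degree:
  assumes "finite (verts G)" and "u \<in> verts G"
  shows "degree G u \<le> max_degree G"
  unfolding max_degree_def using assms by (intro Max_ge) auto

definition wf_graph :: "graph \<Rightarrow> bool" where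
  "wf_graph G \<longleftrightarrow> finite (verts G) \<and> (\<forall>e\<in>edges G. e \<subseteq> verts G)"

lemma verts_star [simp]: "verts (star k) = {0..k}"
  by (simp add: star_def verts_def)

lemma edges_star [simp]: "edges (star k) = {{0, j} | j. 1 \<le> j \<and> j \<le> k}"
  by (simp add: star_def edges_def)

lemma wf_graph_star: "wf_graph (star k)"
  by (auto simp: wf_graph_def)

lemma degree_star_centre: "degree (star k) 0 = k"
proof -
  have "{u \<in> verts (star k). u \<noteq> 0 \<and> {u, 0} \<in> edges (star k)} = {1..k}"
    by (auto simp: doubleton_eq_iff)
  then show ?thesis
    unfolding degree_def by simp
qed

lemma separating_vertex_cover_star:
  assumes "2 \<le> k"
  shows "separating_vertex_cover (star k) {0}"
proof -
  have "outer_nbhd (star k) {0} 0 = {1..k}"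
    unfolding outer_nbhd_def by (auto simp: doubleton_eq_iff)
  then show ?thesis
    using assms unfolding separating_vertex_cover_def by (auto simp: doubleton_eq_iff)
qed

lemma verts_glue_star:
  "verts (glue_star G v k) = verts G \<union> {Max (verts G) + 1 .. Max (verts G) + k}"
  by (simp add: glue_star_def verts_def)

lemma edges_glue_star:
  "edges (glue_star G v k) = edges G \<union> {{Max (verts G) + 1, v}}
     \<union> {{Max (verts G) + 1, j} | j. Max (verts G) + 1 < j \<and> j \<le> Max (verts G) + k}"
  by (simp add: glue_star_def edges_def)

lemma finite_verts_glue_star:
  "finite (verts (glue_star G v k)) \<longleftrightarrow> finite (verts G)"
  by (simp add: verts_glue_star)

lemma less_fresh_vertex:
  assumes "finite (verts G)" and "u \<in> verts G"
  shows "u < Max (verts G) + 1"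
  using Max_ge[OF assms] by simp

lemma wf_graph_glue_star:
  assumes "wf_graph G" and "v \<in> verts G" and "1 \<le> k"
  shows "wf_graph (glue_star G v k)"
  using assms unfolding wf_graph_def verts_glue_star edges_glue_star by auto

lemma card_verts_glue_star:
  assumes "finite (verts G)"
  shows "card (verts (glue_star G v k)) = card (verts G) + k"
proof -
  have "verts G \<inter> {Max (verts G) + 1 .. Max (verts G) + k} = {}"
    using less_fresh_vertex[OF assms] by fastforce
  then show ?thesis
    unfolding verts_glue_star using assms by (simp add: card_Un_disjoint)
qed

lemma degree_glue_star_mono:
  assumes "finite (verts G)"
  shows "degree G u \<le> degree (glue_star G v k) u"
  unfolding degree_def
  by (rule card_mono) (auto simp: verts_glue_star edges_glue_star assms)

lemma degree_glue_star_centre: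
  assumes "finite (verts G)" and "v \<in> verts G"
  shows "k \<le> degree (glue_star G v k) (Max (verts G) + 1)"
proof -
  define m where "m = Max (verts G) + 1"
  let ?H = "glue_star G v k"
  have "v < m"
    using less_fresh_vertex[OF assms] unfolding m_def .
  have "insert v {m + 1 .. m + k - 1} \<subseteq> {u \<in> verts ?H. u \<noteq> m \<and> {u, m} \<in> edges ?H}"
    unfolding verts_glue_star edges_glue_star m_def[symmetric]
    using assms(2) \<open>v < m\<close> by (auto simp: insert_commute m_def)
  moreover have "finite (verts ?H)"
    using assms(1) by (simp add: finite_verts_glue_star)
  ultimately have "card (insert v {m + 1 .. m + k - 1}) \<le> degree ?H m"
    unfolding degree_def by (intro card_mono) auto
  moreover have "k \<le> card (insert v {m + 1 .. m + k - 1})"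
    using \<open>v < m\<close> by simp
  ultimately show ?thesis
    unfolding m_def by linarith
qed

lemma outer_nbhd_glue_star_old:
  assumes "wf_graph G" and "Z \<subseteq> verts G" and "z \<in> Z"
  shows "outer_nbhd (glue_star G v k) (insert (Max (verts G) + 1) Z) z = outer_nbhd G Z z"
proof -
  have fresh: "\<And>u. u \<in> verts G \<Longrightarrow> u < Max (verts G) + 1"
    and "\<And>e. e \<in> edges G \<Longrightarrow> e \<subseteq> verts G"
    using assms(1) less_fresh_vertex unfolding wf_graph_def by auto
  moreover have "z \<noteq> Max (verts G) + 1"
    using assms(2,3) fresh by blast
  ultimately show ?thesis
    unfolding outer_nbhd_def verts_glue_star edges_glue_star
    using assms(2,3) by (auto simp: doubleton_eq_iff)
qed

lemma outer_nbhd_glue_star_new: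
  assumes "finite (verts G)" and "Z \<subseteq> verts G"
  shows "{Max (verts G) + 2 .. Max (verts G) + k}
           \<subseteq> outer_nbhd (glue_star G v k) (insert (Max (verts G) + 1) Z) (Max (verts G) + 1)"
  unfolding outer_nbhd_def verts_glue_star edges_glue_star
  using assms less_fresh_vertex[OF assms(1)] by (force simp: insert_commute)

lemma separating_vertex_cover_glue_star:
  assumes wf: "wf_graph G" and k: "3 \<le> k" and cover: "separating_vertex_cover G Z"
  shows "separating_vertex_cover (glue_star G v k) (insert (Max (verts G) + 1) Z)"
proof -
  define m where "m = Max (verts G) + 1"
  let ?H = "glue_star G v k" and ?Z = "insert m Z"
  have fin: "finite (verts G)"
    using wf unfolding wf_graph_def by auto
  have ZV: "Z \<subseteq> verts G" and old_cover: "\<And>a b. {a, b} \<in> edges G \<Longrightarrow> a \<in> Z \<or> b \<in> Z"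
    and old_two: "\<And>z. z \<in> Z \<Longrightarrow> 2 \<le> card (outer_nbhd G Z z)"
    and old_inj: "inj_on (outer_nbhd G Z) Z"
    using cover unfolding separating_vertex_cover_def by auto
  have old: "outer_nbhd ?H ?Z z = outer_nbhd G Z z" if "z \<in> Z" for z
    using outer_nbhd_glue_star_old[OF wf ZV that] unfolding m_def .
  have leaves: "{m + 1 .. m + k - 1} \<subseteq> outer_nbhd ?H ?Z m"
    using outer_nbhd_glue_star_new[OF fin ZV] unfolding m_def by simp
  have "finite (outer_nbhd ?H ?Z m)"
    using fin unfolding outer_nbhd_def verts_glue_star by simp
  then have two_new: "2 \<le> card (outer_nbhd ?H ?Z m)"
    using card_mono[OF _ leaves] k by simp
  have "m + 1 \<in> outer_nbhd ?H ?Z m" "m + 1 \<notin> verts G"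
    using leaves k less_fresh_vertex[OF fin] unfolding m_def by force+
  moreover have "outer_nbhd G Z z \<subseteq> verts G" for z
    unfolding outer_nbhd_def by blast
  ultimately have "outer_nbhd ?H ?Z m \<noteq> outer_nbhd ?H ?Z z" if "z \<in> Z" for z
    using old[OF that] by blast
  moreover have "inj_on (outer_nbhd ?H ?Z) Z"
    using old_inj inj_on_cong[of Z "outer_nbhd ?H ?Z" "outer_nbhd G Z"] old by blast
  ultimately have "inj_on (outer_nbhd ?H ?Z) ?Z"
    by (auto simp: inj_on_insert)
  moreover have "a \<in> ?Z \<or> b \<in> ?Z" if "{a, b} \<in> edges ?H" for a b
    using that old_cover unfolding edges_glue_star m_def by (auto simp: doubleton_eq_iff)
  moreover have "?Z \<subseteq> verts ?H"
    using ZV k unfolding verts_glue_star m_def by auto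
  moreover have "\<forall>z\<in>?Z. 2 \<le> card (outer_nbhd ?H ?Z z)"
    using old_two old two_new by simp
  ultimately show ?thesis
    unfolding separating_vertex_cover_def m_def[symmetric] by blast
qed

lemma finite_verts_star_chain: "finite (verts (star_chain \<Delta> v i))"
  by (induction i) (simp_all add: finite_verts_glue_star)

lemma card_verts_star_chain: "card (verts (star_chain \<Delta> v i)) = 1 + (\<Sum>j\<le>i. \<Delta> j)"
  by (induction i) (simp_all add: card_verts_glue_star finite_verts_star_chain)

lemma verts_star_chain_mono: "verts (star_chain \<Delta> v i) \<subseteq> verts (star_chain \<Delta> v (Suc i))"
  by (simp add: verts_glue_star)

lemma wf_graph_star_chain:
  assumes "\<And>j. j \<le> i \<Longrightarrow> 1 \<le> \<Delta> j" and "\<And>j. j < i \<Longrightarrow> v j \<in> verts (star_chain \<Delta> v j)"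
  shows "wf_graph (star_chain \<Delta> v i)"
  using assms by (induction i) (simp_all add: wf_graph_star wf_graph_glue_star)

lemma degree_ge_star_chain:
  assumes "\<And>j. j \<le> i \<Longrightarrow> 1 \<le> \<Delta> j"
    and "\<And>j. j < i \<Longrightarrow> v j \<in> verts (star_chain \<Delta> v j)" and "j \<le> i"
  shows "\<exists>u\<in>verts (star_chain \<Delta> v i). \<Delta> j \<le> degree (star_chain \<Delta> v i) u"
  using assms
proof (induction i)
  case 0
  then show ?case
    using degree_star_centre[of "\<Delta> 0"] by (intro bexI[of _ 0]) auto
next
  case (Suc i)
  let ?G = "star_chain \<Delta> v i" and ?H = "star_chain \<Delta> v (Suc i)"
  show ?case
  proof (cases "j = Suc i")
    case True
    have "Max (verts ?G) + 1 \<in> verts ?H"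
      using Suc.prems(1)[of "Suc i"] by (simp add: verts_glue_star)
    then show ?thesis
      using True degree_glue_star_centre[OF finite_verts_star_chain Suc.prems(2)] by force
  next
    case False
    then have "j \<le> i"
      using Suc.prems(3) by simp
    then obtain u where u: "u \<in> verts ?G" "\<Delta> j \<le> degree ?G u"
      using Suc.IH Suc.prems(1,2) by (meson le_SucI less_SucI)
    have "degree ?G u \<le> degree ?H u"
      using degree_glue_star_mono[OF finite_verts_star_chain] by simp
    then show ?thesis
      using u verts_star_chain_mono by (meson le_trans subsetD)
  qed
qed

lemma separating_vertex_cover_star_chain:
  assumes "\<And>j. j \<le> i \<Longrightarrow> 3 \<le> \<Delta> j" and "\<And>j. j < i \<Longrightarrow> v j \<in> verts (star_chain \<Delta> v j)"
  shows "\<exists>Z. separating_vertex_cover (star_chain \<Delta> v i) Z \<and> card Z = i + 1"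
  using assms
proof (induction i)
  case 0
  then show ?case
    using separating_vertex_cover_star[of "\<Delta> 0"] by force
next
  case (Suc i)
  let ?G = "star_chain \<Delta> v i"
  have "\<And>j. j \<le> i \<Longrightarrow> 3 \<le> \<Delta> j" "\<And>j. j < i \<Longrightarrow> v j \<in> verts (star_chain \<Delta> v j)"
    using Suc.prems by simp_all
  then obtain Z where Z: "separating_vertex_cover ?G Z" "card Z = i + 1"
    using Suc.IH by blast
  have "1 \<le> \<Delta> j" if "j \<le> i" for j
    using Suc.prems(1)[of j] that by simp
  then have wf: "wf_graph ?G"
    using Suc.prems(2) by (intro wf_graph_star_chain) simp_all
  have ZG: "Z \<subseteq> verts ?G"
    using Z(1) unfolding separating_vertex_cover_def by blast
  then have "Max (verts ?G) + 1 \<notin> Z"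
    using less_fresh_vertex[OF finite_verts_star_chain] by (meson less_irrefl subsetD)
  moreover have "finite Z"
    using ZG finite_verts_star_chain by (rule finite_subset)
  moreover have "3 \<le> \<Delta> (Suc i)"
    using Suc.prems by simp
  ultimately show ?case
    using separating_vertex_cover_glue_star[OF wf _ Z(1)] Z(2)
    by (intro exI[of _ "insert (Max (verts ?G) + 1) Z"]) simp
qed

lemma gamma_ID_star_chain_le:
  assumes "\<And>j. j \<le> i \<Longrightarrow> 3 \<le> \<Delta> j" and "\<And>j. j < i \<Longrightarrow> v j \<in> verts (star_chain \<Delta> v j)"
  shows "gamma_ID (star_chain \<Delta> v i) + (i + 1) \<le> card (verts (star_chain \<Delta> v i))"
proof -
  let ?G = "star_chain \<Delta> v i"
  obtain Z where Z: "separating_vertex_cover ?G Z" "card Z = i + 1"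
    using separating_vertex_cover_star_chain[OF assms] by blast
  have ZG: "Z \<subseteq> verts ?G"
    using Z(1) unfolding separating_vertex_cover_def by blast
  have "gamma_ID ?G \<le> card (verts ?G - Z)"
    using gamma_ID_le_card[OF finite_verts_star_chain is_identifying_code_Diff_cover[OF Z(1)]] .
  also have "\<dots> = card (verts ?G) - (i + 1)"
    using ZG Z(2) finite_verts_star_chain by (simp add: card_Diff_subset finite_subset)
  finally show ?thesis
    using ZG Z(2) card_mono[OF finite_verts_star_chain ZG] by simp
qed

lemma Max_le_max_degree_star_chain:
  assumes "\<And>j. j \<le> i \<Longrightarrow> 1 \<le> \<Delta> j" and "\<And>j. j < i \<Longrightarrow> v j \<in> verts (star_chain \<Delta> v j)"
  shows "Max (\<Delta> ` {0..i}) \<le> max_degree (star_chain \<Delta> v i)"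
proof (rule Max.boundedI)
  fix d assume "d \<in> \<Delta> ` {0..i}"
  then obtain j where "j \<le> i" "d = \<Delta> j"
    by auto
  then obtain u where "u \<in> verts (star_chain \<Delta> v i)" "d \<le> degree (star_chain \<Delta> v i) u"
    using degree_ge_star_chain[OF assms] by blast
  then show "d \<le> max_degree (star_chain \<Delta> v i)"
    using degree_le_max_degree[OF finite_verts_star_chain] le_trans by blast
qed auto

lemma diff_le_scaled_plus_inverse:
  fixes d :: "nat \<Rightarrow> nat" and M :: nat and n :: real
  assumes n: "n = 1 + (\<Sum>j\<le>p. real (d j))"
    and dM: "\<And>j. j \<le> p \<Longrightarrow> d j \<le> M" and d0: "0 < d 0"
  shows "n - real (p + 1) \<le> (real M - 1) / real M * n + 1 / real (d 0)"
proof -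
  have M: "0 < real M"
    using dM[of 0] d0 by simp
  have "(\<Sum>j\<le>p. real (d j)) \<le> real (card {..p}) * real M"
    using dM by (intro sum_bounded_above) simp
  then have "(\<Sum>j\<le>p. real (d j)) / real M \<le> real (p + 1)"
    using M by (simp add: pos_divide_le_eq)
  moreover have "1 / real M \<le> 1 / real (d 0)"
    using dM[of 0] d0 by (simp add: frac_le)
  ultimately have "n / real M \<le> real (p + 1) + 1 / real (d 0)"
    unfolding n add_divide_distrib by linarith
  moreover have "(real M - 1) / real M * n = n - n / real M"
    using M by (simp add: field_simps)
  ultimately show ?thesis
    by simp
qed

lemma diff_one_divide_mono:
  fixes x y :: real
  assumes "0 < x" and "x \<le> y"
  shows "(x - 1) / x \<le> (y - 1) / y"
proof -
  have "1 / y \<le> 1 / x"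
    using assms by (simp add: frac_le)
  then show ?thesis
    using assms by (simp add: diff_divide_distrib)
qed

theorem mainTheorem5:
  fixes p :: nat and \<Delta> :: "nat \<Rightarrow> nat" and v :: "nat \<Rightarrow> nat"
  assumes "p \<ge> 1"
    and "\<And>i. i \<le> p \<Longrightarrow> \<Delta> i \<ge> 3"
    and "\<And>i. i < p \<Longrightarrow> v i \<in> verts (star_chain \<Delta> v i)"
  shows "real (gamma_ID (star_chain \<Delta> v p))
           \<le> (real (Max (\<Delta> ` {0..p})) - 1) / real (Max (\<Delta> ` {0..p}))
               * real (card (verts (star_chain \<Delta> v p))) + 1 / real (\<Delta> 0)
       \<and> (real (Max (\<Delta> ` {0..p})) - 1) / real (Max (\<Delta> ` {0..p}))
               * real (card (verts (star_chain \<Delta> v p))) + 1 / real (\<Delta> 0)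
           \<le> (real (max_degree (star_chain \<Delta> v p)) - 1) / real (max_degree (star_chain \<Delta> v p))
               * real (card (verts (star_chain \<Delta> v p))) + 1 / 3"
proof -
  let ?G = "star_chain \<Delta> v p" and ?M = "Max (\<Delta> ` {0..p})"
  let ?n = "card (verts ?G)" and ?D = "max_degree ?G"
  have \<Delta>_le_M: "\<Delta> j \<le> ?M" if "j \<le> p" for j
    using that by (intro Max_ge) auto
  have "gamma_ID ?G + (p + 1) \<le> ?n"
    using assms(2,3) by (intro gamma_ID_star_chain_le) auto
  then have "real (gamma_ID ?G) \<le> real ?n - real (p + 1)"
    by linarith
  moreover have "real ?n = 1 + (\<Sum>j\<le>p. real (\<Delta> j))"
    using card_verts_star_chain by simp
  ultimately have first: "real (gamma_ID ?G) \<le> (real ?M - 1) / real ?M * real ?n + 1 / real (\<Delta> 0)"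
    using diff_le_scaled_plus_inverse[where d = \<Delta> and M = ?M, OF _ \<Delta>_le_M] assms(2)[of 0]
    by fastforce
  have "3 \<le> ?M"
    using assms(2)[of 0] \<Delta>_le_M[of 0] by (meson le0 order_trans)
  moreover have "?M \<le> ?D"
    using assms(2,3) by (intro Max_le_max_degree_star_chain) force+
  ultimately have "(real ?M - 1) / real ?M * real ?n \<le> (real ?D - 1) / real ?D * real ?n"
    by (intro mult_right_mono diff_one_divide_mono) auto
  moreover have "1 / real (\<Delta> 0) \<le> 1 / 3"
    using assms(2)[of 0] by (simp add: frac_le)
  ultimately show ?thesis
    using first by linarith
qed

end
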